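(* Let $\mathcal{F}=\{U_1,\dots,U_n\}$ be a family of subsets of a topological space $\mathbf{R}$, let $K$ be a simplicial complex, and let $\gamma\colon C_*(K)\to C_*(\mathbf{R})$ be a nontrivial chain map constrained by $\mathcal{F}$. If $\bigcap_{i=1}^n U_i=\emptyset$, then $\gamma$ is a homological almost-embedding of $K$ in $\mathbf{R}$.
   Context: Coefficients are $\mathbb{Z}_2$; $C_*(K)$ is the simplicial chain complex of $K$ and $C_*(\mathbf{R})$ the singular chain complex of $\mathbf{R}$. For a proper subset $I\subsetneq[n]$ write $U(I)=\bigcap_{i\in[n]\setminus I}U_i$, and put $U([n])=\mathbf{R}$. A chain map $\gamma$ is constrained by $(\mathcal{F},\Phi)$ if $\Phi\colon K\to 2^{[n]}$ satisfies $\Phi(\emptyset)=\emptyset$ and $\Phi(\sigma\cap\tau)=\Phi(\sigma)\cap\Phi(\tau)$ for all $\sigma,\tau\in K$, and for every simplex $\sigma\in K$ the support of $\gamma(\sigma)$ (union of images of singular simplices with nonzero coefficient) is contained in $U(\Phi(\sigma))$; $\gamma$ is constrained by $\mathcal{F}$ if such a $\Phi$ exists. A chain map is nontrivial if each vertex is sent to a $0$-chain consisting of an odd number of points. A homological almost-embedding is a nontrivial chain map sending disjoint simplices of $K$ to chains with disjoint supports. *)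

theory Defs
  imports "HOL-Homology.Homology"
begin

type_synonym 'a ssimplex = "(nat \<Rightarrow> real) \<Rightarrow> 'a"

(* Z2-chains are represented as finite sets of generators (those with coefficient 1). *)

definition simplicial_complex :: "'v set set \<Rightarrow> bool" where
  "simplicial_complex K \<longleftrightarrow> (\<forall>\<sigma>\<in>K. finite \<sigma>) \<and> (\<forall>\<sigma>\<in>K. \<forall>\<tau>. \<tau> \<subseteq> \<sigma> \<longrightarrow> \<tau> \<in> K)"

definition z2_singular_chain :: "nat \<Rightarrow> 'a topology \<Rightarrow> 'a ssimplex set \<Rightarrow> bool" where
  "z2_singular_chain p X c \<longleftrightarrow> finite c \<and> (\<forall>f\<in>c. singular_simplex p X f)"

definition z2_singular_boundary :: "nat \<Rightarrow> 'a ssimplex set \<Rightarrow> 'a ssimplex set" where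
  "z2_singular_boundary p c =
     {g. odd (card {(f, k). f \<in> c \<and> k \<le> p \<and> singular_face p k f = g})}"

(* Z2 simplicial boundary of the simplex sigma, mapped by gamma:
   gamma(boundary sigma) = sum over facets sigma - {v} of gamma(sigma - {v}) *)
definition z2_gamma_of_boundary :: "('v set \<Rightarrow> 'a ssimplex set) \<Rightarrow> 'v set \<Rightarrow> 'a ssimplex set" where
  "z2_gamma_of_boundary \<gamma> \<sigma> = {g. odd (card {v \<in> \<sigma>. g \<in> \<gamma> (\<sigma> - {v})})}"

(* a chain map C_*(K) -> C_*(X) with Z2 coefficients, given by its values on the
   (nonempty) simplices of K; a simplex with card (p+1) is sent to a singular p-chain *)
definition z2_chain_map :: "'v set set \<Rightarrow> 'a topology \<Rightarrow> ('v set \<Rightarrow> 'a ssimplex set) \<Rightarrow> bool" where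
  "z2_chain_map K X \<gamma> \<longleftrightarrow>
     (\<forall>\<sigma>\<in>K. \<sigma> \<noteq> {} \<longrightarrow> z2_singular_chain (card \<sigma> - 1) X (\<gamma> \<sigma>)) \<and>
     (\<forall>\<sigma>\<in>K. card \<sigma> \<ge> 2 \<longrightarrow>
        z2_singular_boundary (card \<sigma> - 1) (\<gamma> \<sigma>) = z2_gamma_of_boundary \<gamma> \<sigma>)"

definition chain_support :: "nat \<Rightarrow> 'a ssimplex set \<Rightarrow> 'a set" where
  "chain_support p c = (\<Union>f\<in>c. f ` standard_simplex p)"

definition nontrivial_chain_map :: "'v set set \<Rightarrow> ('v set \<Rightarrow> 'a ssimplex set) \<Rightarrow> bool" where
  "nontrivial_chain_map K \<gamma> \<longleftrightarrow> (\<forall>v. {v} \<in> K \<longrightarrow> odd (card (\<gamma> {v})))"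

definition U_of :: "'a topology \<Rightarrow> nat \<Rightarrow> (nat \<Rightarrow> 'a set) \<Rightarrow> nat set \<Rightarrow> 'a set" where
  "U_of X n U I = (if I = {1..n} then topspace X else (\<Inter>i\<in>{1..n} - I. U i))"

definition constrained_by_with ::
  "'v set set \<Rightarrow> 'a topology \<Rightarrow> nat \<Rightarrow> (nat \<Rightarrow> 'a set) \<Rightarrow> ('v set \<Rightarrow> nat set)
     \<Rightarrow> ('v set \<Rightarrow> 'a ssimplex set) \<Rightarrow> bool" where
  "constrained_by_with K X n U \<Phi> \<gamma> \<longleftrightarrow>
     (\<forall>\<sigma>\<in>K. \<Phi> \<sigma> \<subseteq> {1..n}) \<and>
     \<Phi> {} = {} \<and>
     (\<forall>\<sigma>\<in>K. \<forall>\<tau>\<in>K. \<Phi> (\<sigma> \<inter> \<tau>) = \<Phi> \<sigma> \<inter> \<Phi> \<tau>) \<and>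
     (\<forall>\<sigma>\<in>K. \<sigma> \<noteq> {} \<longrightarrow> chain_support (card \<sigma> - 1) (\<gamma> \<sigma>) \<subseteq> U_of X n U (\<Phi> \<sigma>))"

definition constrained_by ::
  "'v set set \<Rightarrow> 'a topology \<Rightarrow> nat \<Rightarrow> (nat \<Rightarrow> 'a set) \<Rightarrow> ('v set \<Rightarrow> 'a ssimplex set) \<Rightarrow> bool" where
  "constrained_by K X n U \<gamma> \<longleftrightarrow> (\<exists>\<Phi>. constrained_by_with K X n U \<Phi> \<gamma>)"

definition homological_almost_embedding ::
  "'v set set \<Rightarrow> 'a topology \<Rightarrow> ('v set \<Rightarrow> 'a ssimplex set) \<Rightarrow> bool" where
  "homological_almost_embedding K X \<gamma> \<longleftrightarrow>
     z2_chain_map K X \<gamma> \<and> nontrivial_chain_map K \<gamma> \<and>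
     (\<forall>\<sigma>\<in>K. \<forall>\<tau>\<in>K. \<sigma> \<noteq> {} \<longrightarrow> \<tau> \<noteq> {} \<longrightarrow> \<sigma> \<inter> \<tau> = {} \<longrightarrow>
        chain_support (card \<sigma> - 1) (\<gamma> \<sigma>) \<inter> chain_support (card \<tau> - 1) (\<gamma> \<tau>) = {})"

end

theory Submission
  imports Defs
begin

text \<open>Since \<open>\<Phi>\<close> commutes with intersections and \<open>\<Phi> {} = {}\<close>, disjoint simplices
  \<open>\<sigma>\<close>, \<open>\<tau>\<close> get disjoint label sets. Every index \<open>i\<close> is then missing from \<open>\<Phi> \<sigma>\<close> or
  from \<open>\<Phi> \<tau>\<close>, so a common point of the two supports would lie in every \<open>U i\<close>,
  whose intersection is empty.\<close>

lemma U_of_subset_Inter_if_disjoint: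
  assumes "I \<inter> J = {}"
  shows "U_of X n U I \<inter> U_of X n U J \<subseteq> (\<Inter>i\<in>{1..n}. U i)"
  using assms unfolding U_of_def by (auto split: if_splits)

lemma U_of_subset_topspace:
  assumes "I \<subseteq> {1..n}" and "\<And>i. i \<in> {1..n} \<Longrightarrow> U i \<subseteq> topspace X"
  shows "U_of X n U I \<subseteq> topspace X"
proof (cases "I = {1..n}")
  case False
  then obtain i where "i \<in> {1..n} - I"
    using assms(1) by blast
  then show ?thesis
    using assms(2)[of i] unfolding U_of_def by auto
qed (simp add: U_of_def)

lemma constrained_by_with_disjoint_labels:
  assumes "constrained_by_with K X n U \<Phi> \<gamma>" "\<sigma> \<in> K" "\<tau> \<in> K" "\<sigma> \<inter> \<tau> = {}"
  shows "\<Phi> \<sigma> \<inter> \<Phi> \<tau> = {}"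
proof -
  have "\<Phi> \<sigma> \<inter> \<Phi> \<tau> = \<Phi> (\<sigma> \<inter> \<tau>)"
    using assms(1-3) unfolding constrained_by_with_def by blast
  also have "\<dots> = {}"
    using assms(1,4) unfolding constrained_by_with_def by simp
  finally show ?thesis .
qed

lemma constrained_by_with_disjoint_supports:
  assumes constrained: "constrained_by_with K X n U \<Phi> \<gamma>"
    and U_sub: "\<And>i. i \<in> {1..n} \<Longrightarrow> U i \<subseteq> topspace X"
    and empty: "topspace X \<inter> (\<Inter>i\<in>{1..n}. U i) = {}"
    and "\<sigma> \<in> K" "\<tau> \<in> K" "\<sigma> \<noteq> {}" "\<tau> \<noteq> {}" "\<sigma> \<inter> \<tau> = {}"
  shows "chain_support (card \<sigma> - 1) (\<gamma> \<sigma>) \<inter> chain_support (card \<tau> - 1) (\<gamma> \<tau>) = {}"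
proof -
  have support: "chain_support (card \<rho> - 1) (\<gamma> \<rho>) \<subseteq> U_of X n U (\<Phi> \<rho>)"
    if "\<rho> \<in> K" "\<rho> \<noteq> {}" for \<rho>
    using constrained that unfolding constrained_by_with_def by blast
  have "\<Phi> \<sigma> \<subseteq> {1..n}"
    using constrained \<open>\<sigma> \<in> K\<close> unfolding constrained_by_with_def by blast
  then have "U_of X n U (\<Phi> \<sigma>) \<subseteq> topspace X"
    by (rule U_of_subset_topspace) (rule U_sub)
  moreover have "U_of X n U (\<Phi> \<sigma>) \<inter> U_of X n U (\<Phi> \<tau>) \<subseteq> (\<Inter>i\<in>{1..n}. U i)"
    using U_of_subset_Inter_if_disjoint constrained_by_with_disjoint_labels assms(1,4,5,8) .
  ultimately have "U_of X n U (\<Phi> \<sigma>) \<inter> U_of X n U (\<Phi> \<tau>) = {}"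
    using empty by blast
  then show ?thesis
    using support[OF \<open>\<sigma> \<in> K\<close> \<open>\<sigma> \<noteq> {}\<close>] support[OF \<open>\<tau> \<in> K\<close> \<open>\<tau> \<noteq> {}\<close>] by blast
qed

theorem lemma26:
  fixes X :: "'a topology" and n :: nat and U :: "nat \<Rightarrow> 'a set"
    and K :: "'v set set" and \<gamma> :: "'v set \<Rightarrow> 'a ssimplex set"
  assumes "\<And>i. i \<in> {1..n} \<Longrightarrow> U i \<subseteq> topspace X"
    and "simplicial_complex K"
    and "z2_chain_map K X \<gamma>"
    and "nontrivial_chain_map K \<gamma>"
    and "constrained_by K X n U \<gamma>"
    and "topspace X \<inter> (\<Inter>i\<in>{1..n}. U i) = {}"
  shows "homological_almost_embedding K X \<gamma>"
proof -
  obtain \<Phi> where constrained: "constrained_by_with K X n U \<Phi> \<gamma>"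
    using assms(5) unfolding constrained_by_def by blast
  show ?thesis
    unfolding homological_almost_embedding_def
  proof (intro conjI ballI impI)
    fix \<sigma> \<tau>
    assume "\<sigma> \<in> K" "\<tau> \<in> K" "\<sigma> \<noteq> {}" "\<tau> \<noteq> {}" "\<sigma> \<inter> \<tau> = {}"
    then show "chain_support (card \<sigma> - 1) (\<gamma> \<sigma>) \<inter> chain_support (card \<tau> - 1) (\<gamma> \<tau>) = {}"
      using constrained_by_with_disjoint_supports[OF constrained assms(1,6)] by blast
  qed (fact assms(3,4))+
qed

end
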